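(* Let $K\subset\mathbb R^d$ be compact, $\varepsilon>0$, $r>0$ and $\mu\in\mathcal F(K)$. There exists $\delta>0$ such that every $\nu\in\mathcal P(K)$ with $L(\mu,\nu)<\delta$ satisfies $I_\nu(r,1)\le\log2+(1-\varepsilon)I_\mu(2r,1)$.
   Context: $\mathcal P(K)$ is the set of Borel probability measures on $K$, $\mathcal F(K)$ the subset of those with finite support. $L$ is the Fortet–Mourier metric $L(\mu,\nu)=\sup_f|\int fd\mu-\int fd\nu|$ over $f:K\to\mathbb R$ with $|f|\le1$ and Lipschitz constant $\le1$. $B(x,r)$ is the open ball and $I_\mu(r,1)=\int_K\log\mu(B(x,r))\,d\mu(x)$. *)

theory Defs
  imports "HOL-Probability.Probability"
begin

definition prob_measures_on :: "'a::euclidean_space set \<Rightarrow> 'a measure set" where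
  "prob_measures_on K = {M. sets M = sets borel \<and> prob_space M \<and> measure M K = 1}"

definition finite_prob_measures_on :: "'a::euclidean_space set \<Rightarrow> 'a measure set" where
  "finite_prob_measures_on K =
     {M \<in> prob_measures_on K. \<exists>S. finite S \<and> S \<subseteq> K \<and> measure M S = 1}"

text \<open>Test functions for the Fortet--Mourier metric: functions on K bounded by 1 with
  Lipschitz constant at most 1 on K (values off K are irrelevant; integrals are taken
  of the function restricted to K).\<close>
definition FM_test :: "'a::euclidean_space set \<Rightarrow> ('a \<Rightarrow> real) set" where
  "FM_test K = {f. (\<forall>x\<in>K. \<bar>f x\<bar> \<le> 1) \<and> 1-lipschitz_on K f}"

definition FM_dist :: "'a::euclidean_space set \<Rightarrow> 'a measure \<Rightarrow> 'a measure \<Rightarrow> real" where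
  "FM_dist K \<mu> \<nu> = (SUP f\<in>FM_test K.
      \<bar>(\<integral>x. f x * indicator K x \<partial>\<mu>) - (\<integral>x. f x * indicator K x \<partial>\<nu>)\<bar>)"

definition I_one :: "'a::euclidean_space measure \<Rightarrow> real \<Rightarrow> real" where
  "I_one \<mu> r = (\<integral>x. ln (measure \<mu> (ball x r)) \<partial>\<mu>)"

end

theory Submission
  imports Defs
begin

text \<open>Write \<open>\<mu> = \<Sum>\<^sub>s w\<^sub>s \<delta>\<^sub>s\<close>. Tent functions of height \<open>\<rho> \<le> 1\<close> are admissible test functions
  for \<open>L\<close>, so \<open>L(\<mu>,\<nu>) < \<eta>\<rho>\<close> transfers mass bounds between \<open>\<mu>\<close> and \<open>\<nu>\<close>:
  \<open>\<nu>(B(s,\<rho>)) \<ge> w\<^sub>s - \<eta>\<close> and \<open>\<nu>(B[s,2r-\<rho>]) \<le> \<mu>(B(s,2r)) + \<eta>\<close>. Once \<open>\<rho>\<close> is below half the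
  minimal distance between atoms, the balls \<open>B(s,\<rho>)\<close> are disjoint, and \<open>B(x,r) \<subseteq> B[s,2r-\<rho>]\<close> for
  \<open>x \<in> B(s,\<rho>)\<close>; as \<open>log \<nu>(B(x,r)) \<le> 0\<close> everywhere, \<open>I\<^sub>\<nu>(r,1)\<close> is bounded by
  \<open>\<Sum>\<^sub>s \<nu>(B(s,\<rho>)) min(0, log(\<mu>(B(s,2r)) + \<eta>))\<close>. For small \<open>\<eta>\<close> this is at most
  \<open>log(3/2) + 1/4 + I\<^sub>\<mu>(2r,1) \<le> log 2 + I\<^sub>\<mu>(2r,1)\<close>, and \<open>I\<^sub>\<mu>(2r,1) \<le> 0\<close> absorbs the factor \<open>1 - \<epsilon>\<close>.\<close>

lemma prob_measures_onD:
  assumes "M \<in> prob_measures_on K"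
  shows "prob_space M" "sets M = sets borel" "K \<in> sets M" "AE x in M. x \<in> K"
proof -
  have M: "prob_space M" "sets M = sets borel" and K1: "measure M K = 1"
    using assms by (auto simp: prob_measures_on_def)
  then show "prob_space M" "sets M = sets borel" by auto
  show "K \<in> sets M" using K1 measure_notin_sets by fastforce
  then show "AE x in M. x \<in> K"
    using K1 prob_space.AE_prob_1[OF M(1)] by blast
qed

lemma finite_prob_measures_onE:
  fixes K :: "'a::euclidean_space set"
  assumes "\<mu> \<in> finite_prob_measures_on K"
  obtains T where "finite T" "\<And>s. s \<in> T \<Longrightarrow> 0 < measure \<mu> {s}"
    "(\<Sum>s\<in>T. measure \<mu> {s}) = 1"
    "\<And>f. f \<in> borel_measurable borel \<Longrightarrow> integral\<^sup>L \<mu> f = (\<Sum>s\<in>T. measure \<mu> {s} * f s)"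
proof -
  obtain S where mu: "\<mu> \<in> prob_measures_on K" and S: "finite S" "measure \<mu> S = 1"
    using assms by (auto simp: finite_prob_measures_on_def)
  note M = prob_measures_onD[OF mu]
  interpret prob_space \<mu> by (fact M(1))
  define T where "T = {s \<in> S. 0 < measure \<mu> {s}}"
  have T: "finite T" "T \<subseteq> S" using S(1) by (auto simp: T_def)
  have measure_finite: "measure \<mu> A = (\<Sum>s\<in>A. measure \<mu> {s})" if "finite A" for A
    using that M(2) by (intro measure_eq_sum_singleton) auto
  have "(\<Sum>s\<in>T. measure \<mu> {s}) = (\<Sum>s\<in>S. measure \<mu> {s})"
    by (rule sum.mono_neutral_left[OF S(1) T(2)]) (auto simp: T_def zero_less_measure_iff)
  then have sum_T: "(\<Sum>s\<in>T. measure \<mu> {s}) = 1"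
    using S(2) measure_finite[OF S(1)] by simp
  have AE_T: "AE x in \<mu>. x \<in> T"
    using sum_T measure_finite[OF T(1)] by (intro AE_prob_1) simp
  have integral_T: "integral\<^sup>L \<mu> f = (\<Sum>s\<in>T. measure \<mu> {s} * f s)"
    if f: "f \<in> borel_measurable borel" for f :: "'a \<Rightarrow> real"
  proof -
    have f_meas: "f \<in> borel_measurable \<mu>"
      using f by (simp add: measurable_cong_sets[OF M(2) refl])
    have "T \<in> sets \<mu>" using T(1) M(2) by (simp add: finite_imp_closed)
    have "integral\<^sup>L \<mu> f = (\<integral>x. f x * indicator T x \<partial>\<mu>)"
    proof (rule integral_cong_AE)
      show "(\<lambda>x. f x * indicator T x) \<in> borel_measurable \<mu>"
        using f_meas \<open>T \<in> sets \<mu>\<close> by (rule borel_measurable_times[OF _ borel_measurable_indicator])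
      show "AE x in \<mu>. f x = f x * indicator T x"
        using AE_T by eventually_elim simp
    qed (fact f_meas)
    also have "\<dots> = (\<Sum>s\<in>T. f s * measure \<mu> {s})"
      using T(1) M(2) by (intro integral_indicator_finite_real) (auto simp: less_top[symmetric])
    finally show ?thesis by (simp add: mult.commute)
  qed
  show ?thesis
    using T(1) sum_T integral_T by (intro that) (auto simp: T_def)
qed

lemma FM_dist_commute: "FM_dist K \<mu> \<nu> = FM_dist K \<nu> \<mu>"
  unfolding FM_dist_def by (simp add: abs_minus_commute)

lemma (in prob_space) abs_integral_le_1:
  fixes f :: "'a \<Rightarrow> real"
  assumes "\<And>x. \<bar>f x\<bar> \<le> 1"
  shows "\<bar>integral\<^sup>L M f\<bar> \<le> 1"
proof -
  have "\<bar>integral\<^sup>L M f\<bar> \<le> integral\<^sup>L M (\<lambda>x. \<bar>f x\<bar>)"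
    by simp
  also have "\<dots> \<le> integral\<^sup>L M (\<lambda>x. 1)"
    using assms by (intro integral_mono_AE') auto
  finally show ?thesis by (simp add: prob_space)
qed

lemma integral_diff_le_FM_dist:
  fixes K :: "'a::euclidean_space set"
  assumes "\<mu> \<in> prob_measures_on K" "\<nu> \<in> prob_measures_on K"
    and "f \<in> FM_test K" "f \<in> borel_measurable borel"
  shows "\<bar>integral\<^sup>L \<mu> f - integral\<^sup>L \<nu> f\<bar> \<le> FM_dist K \<mu> \<nu>"
proof -
  have restrict_K: "(\<integral>x. g x * indicator K x \<partial>M) = integral\<^sup>L M g"
    if "M \<in> prob_measures_on K" "g \<in> borel_measurable borel" for M and g :: "'a \<Rightarrow> real"
  proof (rule integral_cong_AE)
    note M = prob_measures_onD[OF that(1)]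
    show "g \<in> borel_measurable M" using that(2) M(2) measurable_cong_sets by blast
    then show "(\<lambda>x. g x * indicator K x) \<in> borel_measurable M"
      using M(3) by (rule borel_measurable_times[OF _ borel_measurable_indicator])
    show "AE x in M. g x * indicator K x = g x" using M(4) by eventually_elim simp
  qed
  have "bdd_above ((\<lambda>g. \<bar>(\<integral>x. g x * indicator K x \<partial>\<mu>) - (\<integral>x. g x * indicator K x \<partial>\<nu>)\<bar>) ` FM_test K)"
  proof (rule bdd_aboveI2)
    fix g assume "g \<in> FM_test K"
    then have "\<bar>g x * indicator K x\<bar> \<le> 1" for x
      by (auto simp: FM_test_def indicator_def)
    then have "\<bar>\<integral>x. g x * indicator K x \<partial>M\<bar> \<le> 1" if "M \<in> prob_measures_on K" for M
      by (rule prob_space.abs_integral_le_1[OF prob_measures_onD(1)[OF that]])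
    from this[OF assms(1)] this[OF assms(2)]
    show "\<bar>(\<integral>x. g x * indicator K x \<partial>\<mu>) - (\<integral>x. g x * indicator K x \<partial>\<nu>)\<bar> \<le> 2"
      using abs_triangle_ineq4 by (smt (verit))
  qed
  then show ?thesis
    using cSUP_upper[OF assms(3)] restrict_K[OF _ assms(4)] assms(1,2)
    unfolding FM_dist_def by fastforce
qed

lemma (in finite_measure) integral_between_indicators:
  fixes f :: "'a \<Rightarrow> real"
  assumes "f \<in> borel_measurable M" "A \<in> sets M" "B \<in> sets M"
    and "\<And>x. x \<in> space M \<Longrightarrow> c * indicator A x \<le> f x"
    and "\<And>x. x \<in> space M \<Longrightarrow> f x \<le> c * indicator B x"
  shows "c * measure M A \<le> integral\<^sup>L M f" "integral\<^sup>L M f \<le> c * measure M B"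
proof -
  have "\<bar>f x\<bar> \<le> \<bar>c\<bar>" if "x \<in> space M" for x
    using assms(4,5)[OF that] by (cases "x \<in> A"; cases "x \<in> B") auto
  then have f: "integrable M f"
    using assms(1) by (intro integrable_const_bound[where B="\<bar>c\<bar>"]) auto
  have "integrable M (\<lambda>x. c * indicator S x)" if "S \<in> sets M" for S
    using that by (simp add: emeasure_eq_measure)
  then show "c * measure M A \<le> integral\<^sup>L M f" "integral\<^sup>L M f \<le> c * measure M B"
    using integral_mono[OF _ f, of "\<lambda>x. c * indicator A x"]
      integral_mono[OF f, of "\<lambda>x. c * indicator B x"] assms
    by auto
qed

definition tent :: "'a::metric_space \<Rightarrow> real \<Rightarrow> real \<Rightarrow> 'a \<Rightarrow> real" where
  "tent s t \<rho> x = max 0 (min \<rho> (t - dist x s))"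

lemma tent_in_FM_test:
  assumes "0 \<le> \<rho>" "\<rho> \<le> 1"
  shows "tent s t \<rho> \<in> FM_test K"
  unfolding FM_test_def
proof (intro CollectI conjI ballI lipschitz_onI)
  fix x y
  have "\<bar>dist x s - dist y s\<bar> \<le> dist x y"
    by (metis abs_dist_diff_le dist_commute)
  then show "dist (tent s t \<rho> x) (tent s t \<rho> y) \<le> 1 * dist x y"
    unfolding tent_def dist_real_def by linarith
qed (use assms in \<open>auto simp: tent_def\<close>)

lemma borel_measurable_tent [measurable]: "tent s t \<rho> \<in> borel_measurable borel"
  unfolding tent_def by (intro borel_measurable_continuous_onI continuous_intros)

lemma tent_between_indicators:
  assumes "0 \<le> \<rho>"
  shows "\<rho> * indicator (cball s (t - \<rho>)) x \<le> tent s t \<rho> x"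
    and "tent s t \<rho> x \<le> \<rho> * indicator (ball s t) x"
  using assms by (auto simp: tent_def indicator_def dist_commute)

lemma measure_cball_le_measure_ball_plus_FM_dist:
  fixes K :: "'a::euclidean_space set"
  assumes "\<mu> \<in> prob_measures_on K" "\<nu> \<in> prob_measures_on K" "0 < \<rho>" "\<rho> \<le> 1"
  shows "measure \<mu> (cball s (t - \<rho>)) \<le> measure \<nu> (ball s t) + FM_dist K \<mu> \<nu> / \<rho>"
proof -
  have bounds: "\<rho> * measure M (cball s (t - \<rho>)) \<le> integral\<^sup>L M (tent s t \<rho>)"
    "integral\<^sup>L M (tent s t \<rho>) \<le> \<rho> * measure M (ball s t)"
    if "M \<in> prob_measures_on K" for M
  proof -
    note M = prob_measures_onD[OF that]
    interpret prob_space M by (fact M(1))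
    have "tent s t \<rho> \<in> borel_measurable M"
      by (simp add: measurable_cong_sets[OF M(2) refl])
    from integral_between_indicators[OF this, of "cball s (t - \<rho>)" "ball s t" \<rho>]
      tent_between_indicators[of \<rho> s t] assms(3) M(2)
    show "\<rho> * measure M (cball s (t - \<rho>)) \<le> integral\<^sup>L M (tent s t \<rho>)"
      "integral\<^sup>L M (tent s t \<rho>) \<le> \<rho> * measure M (ball s t)"
      by auto
  qed
  have "\<bar>integral\<^sup>L \<mu> (tent s t \<rho>) - integral\<^sup>L \<nu> (tent s t \<rho>)\<bar> \<le> FM_dist K \<mu> \<nu>"
    using assms by (intro integral_diff_le_FM_dist tent_in_FM_test) auto
  then have "\<rho> * measure \<mu> (cball s (t - \<rho>)) \<le> \<rho> * measure \<nu> (ball s t) + FM_dist K \<mu> \<nu>"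
    using bounds[OF assms(1)] bounds[OF assms(2)] by linarith
  then show ?thesis
    using assms(3) by (simp add: field_simps)
qed

lemma FM_dist_lt_mass_bounds:
  fixes K :: "'a::euclidean_space set"
  assumes "\<mu> \<in> prob_measures_on K" "\<nu> \<in> prob_measures_on K" "0 < \<rho>" "\<rho> \<le> 1"
    and "FM_dist K \<mu> \<nu> < \<eta> * \<rho>"
  shows "measure \<mu> {s} - \<eta> \<le> measure \<nu> (ball s \<rho>)"
    and "measure \<nu> (cball s (R - \<rho>)) \<le> measure \<mu> (ball s R) + \<eta>"
proof -
  have "FM_dist K \<mu> \<nu> / \<rho> < \<eta>" "FM_dist K \<nu> \<mu> / \<rho> < \<eta>"
    using assms(3,5) by (simp_all add: FM_dist_commute[of K \<nu>] divide_less_eq)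
  then show "measure \<mu> {s} - \<eta> \<le> measure \<nu> (ball s \<rho>)"
    "measure \<nu> (cball s (R - \<rho>)) \<le> measure \<mu> (ball s R) + \<eta>"
    using measure_cball_le_measure_ball_plus_FM_dist[OF assms(1,2,3,4), of s \<rho>]
      measure_cball_le_measure_ball_plus_FM_dist[OF assms(2,1,3,4), of s R]
    by simp_all
qed

lemma measurable_measure_ball:
  fixes N :: "'a::euclidean_space measure"
  assumes "sets N = sets borel" "finite_measure N"
  shows "(\<lambda>x. measure N (ball x r)) \<in> borel_measurable borel"
proof -
  interpret finite_measure N by fact
  have "sets (borel \<Otimes>\<^sub>M N) = sets (borel \<Otimes>\<^sub>M (borel::'a measure))"
    by (rule sets_pair_measure_cong) (auto simp: assms)
  also have "\<dots> = sets (borel :: ('a \<times> 'a) measure)"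
    by (rule arg_cong[where f=sets, OF borel_prod])
  finally have "{p::'a \<times> 'a. dist (fst p) (snd p) < r} \<in> sets (borel \<Otimes>\<^sub>M N)"
    by (auto intro!: borel_open open_Collect_less continuous_intros)
  from measurable_emeasure_Pair[OF this]
  have "(\<lambda>x. emeasure N (ball x r)) \<in> borel_measurable borel"
    by (simp add: ball_def vimage_def)
  then show ?thesis unfolding measure_def by measurable
qed

lemma measure_ball_AE_lower_bound:
  fixes K :: "'a::euclidean_space set"
  assumes "compact K" "\<nu> \<in> prob_measures_on K" "0 < r"
  obtains m where "0 < m" "AE x in \<nu>. m \<le> measure \<nu> (ball x r)"
proof -
  note N = prob_measures_onD[OF assms(2)]
  interpret prob_space \<nu> by (fact N(1))
  obtain C where C: "finite C" "K \<subseteq> (\<Union>c\<in>C. ball c (r/2))"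
  proof (rule compactE_image[OF assms(1), of K "\<lambda>c. ball c (r/2)"])
    show "K \<subseteq> (\<Union>c\<in>K. ball c (r/2))" using assms(3) by force
  qed auto
  define P where "P = {c \<in> C. 0 < measure \<nu> (ball c (r/2))}"
  define m where "m = Min (insert 1 ((\<lambda>c. measure \<nu> (ball c (r/2))) ` P))"
  have "0 < m" using C(1) by (auto simp: m_def P_def)
  have null: "AE x in \<nu>. \<forall>c\<in>C - P. x \<notin> ball c (r/2)"
  proof (rule AE_finite_allI)
    fix c assume "c \<in> C - P"
    then have "ball c (r/2) \<in> null_sets \<nu>"
      using N(2) by (intro null_setsI) (auto simp: P_def emeasure_eq_measure zero_less_measure_iff)
    then show "AE x in \<nu>. x \<notin> ball c (r/2)" by (rule AE_not_in)
  qed (use C(1) in simp)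
  have "AE x in \<nu>. m \<le> measure \<nu> (ball x r)"
    using N(4) null
  proof eventually_elim
    case (elim x)
    then obtain c where c: "c \<in> P" "x \<in> ball c (r/2)" using C(2) by blast
    have "m \<le> measure \<nu> (ball c (r/2))"
      using c(1) C(1) by (auto simp: m_def P_def)
    also have "\<dots> \<le> measure \<nu> (ball x r)"
    proof (rule finite_measure_mono)
      show "ball c (r/2) \<subseteq> ball x r"
        using c(2) dist_triangle_half_r[of c x r] by auto
    qed (simp add: N(2))
    finally show ?case .
  qed
  with \<open>0 < m\<close> show ?thesis by (rule that)
qed

lemma integrable_ln_measure_ball:
  fixes K :: "'a::euclidean_space set"
  assumes "compact K" "\<nu> \<in> prob_measures_on K" "0 < r"
  shows "integrable \<nu> (\<lambda>x. ln (measure \<nu> (ball x r)))"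
proof -
  note N = prob_measures_onD[OF assms(2)]
  interpret prob_space \<nu> by (fact N(1))
  obtain m where m: "0 < m" "AE x in \<nu>. m \<le> measure \<nu> (ball x r)"
    by (rule measure_ball_AE_lower_bound[OF assms])
  have "AE x in \<nu>. \<bar>ln (measure \<nu> (ball x r))\<bar> \<le> \<bar>ln m\<bar>"
    using m(2)
  proof eventually_elim
    case (elim x)
    then have "ln m \<le> ln (measure \<nu> (ball x r))" "ln (measure \<nu> (ball x r)) \<le> 0"
      using m(1) prob_le_1 by auto
    then show ?case by linarith
  qed
  moreover have "(\<lambda>x. ln (measure \<nu> (ball x r))) \<in> borel_measurable \<nu>"
    using measurable_measure_ball[OF N(2) finite_measure_axioms] N(2)
    by (simp add: measurable_cong_sets[OF N(2) refl])
  ultimately show ?thesis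
    by (intro integrable_const_bound[where B="\<bar>ln m\<bar>"]) auto
qed

lemma I_one_nonpos:
  assumes "prob_space M"
  shows "I_one M r \<le> 0"
proof -
  interpret prob_space M by fact
  have "ln (measure M (ball x r)) \<le> 0" for x
    using prob_le_1[of "ball x r"] by (cases "measure M (ball x r) = 0") (auto simp: zero_less_measure_iff)
  then have "0 \<le> (\<integral>x. - ln (measure M (ball x r)) \<partial>M)"
    by (intro integral_nonneg_AE) auto
  then show ?thesis by (simp add: I_one_def)
qed

lemma I_one_le_sum_over_disjoint_balls:
  fixes K :: "'a::euclidean_space set"
  assumes "compact K" "\<nu> \<in> prob_measures_on K" "0 < r" "finite T"
    and disjoint: "disjoint_family_on (\<lambda>s. ball s \<rho>) T"
    and "r + \<rho> \<le> R" and bound: "\<And>s. s \<in> T \<Longrightarrow> measure \<nu> (cball s R) \<le> b s"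
  shows "I_one \<nu> r \<le> (\<Sum>s\<in>T. min 0 (ln (b s)) * measure \<nu> (ball s \<rho>))"
proof -
  note N = prob_measures_onD[OF assms(2)]
  interpret prob_space \<nu> by (fact N(1))
  define g where "g x = (\<Sum>s\<in>T. min 0 (ln (b s)) * indicator (ball s \<rho>) x)" for x
  obtain m where m: "0 < m" "AE x in \<nu>. m \<le> measure \<nu> (ball x r)"
    by (rule measure_ball_AE_lower_bound[OF assms(1-3)])
  have "AE x in \<nu>. ln (measure \<nu> (ball x r)) \<le> g x"
    using m(2)
  proof eventually_elim
    case (elim x)
    then have pos: "0 < measure \<nu> (ball x r)" using m(1) by linarith
    then have nonpos: "ln (measure \<nu> (ball x r)) \<le> 0" using prob_le_1 by simp
    show ?case
    proof (cases "\<exists>s\<in>T. x \<in> ball s \<rho>")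
      case True
      then obtain s where s: "s \<in> T" "x \<in> ball s \<rho>" by blast
      have "indicator (ball t \<rho>) x = (if t = s then 1 else 0 :: real)" if "t \<in> T" for t
        using disjoint_family_onD[OF disjoint that s(1)] s(2) by (auto simp: indicator_def disjoint_iff)
      then have "g x = (\<Sum>t\<in>T. if t = s then min 0 (ln (b t)) else 0)"
        unfolding g_def by (intro sum.cong) auto
      then have "g x = min 0 (ln (b s))"
        using s(1) assms(4) by simp
      moreover have "ball x r \<subseteq> cball s R"
      proof
        fix y assume "y \<in> ball x r"
        then show "y \<in> cball s R" using s(2) assms(6) dist_triangle[of s y x] by simp
      qed
      then have "measure \<nu> (ball x r) \<le> b s"
        using bound[OF s(1)] finite_measure_mono[of "ball x r" "cball s R"] N(2) by force
      ultimately show ?thesis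
        using pos nonpos by simp
    next
      case False
      then show ?thesis using nonpos by (simp add: g_def)
    qed
  qed
  moreover have "integrable \<nu> g"
    unfolding g_def using N(2) by (auto simp: less_top[symmetric])
  moreover have "integral\<^sup>L \<nu> g = (\<Sum>s\<in>T. min 0 (ln (b s)) * measure \<nu> (ball s \<rho>))"
    unfolding g_def using N(2) by (simp add: less_top[symmetric])
  ultimately show ?thesis
    unfolding I_one_def using integrable_ln_measure_ball[OF assms(1-3)]
    by (metis integral_mono_AE)
qed

lemma sum_min_ln_le_ln_2_plus_sum:
  fixes w q m :: "'b \<Rightarrow> real"
  assumes "finite T" "(\<Sum>s\<in>T. w s) = 1" "0 < \<eta>"
    and w: "\<And>s. s \<in> T \<Longrightarrow> 2 * \<eta> \<le> w s" and q: "\<And>s. s \<in> T \<Longrightarrow> w s \<le> q s"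
    and small: "\<eta> * (\<Sum>s\<in>T. - ln (q s)) \<le> 1/4"
    and m: "\<And>s. s \<in> T \<Longrightarrow> w s - \<eta> \<le> m s"
  shows "(\<Sum>s\<in>T. min 0 (ln (q s + \<eta>)) * m s) \<le> ln 2 + (\<Sum>s\<in>T. w s * ln (q s))"
proof -
  have term_bound: "min 0 (ln (q s + \<eta>)) * m s \<le> ln (3/2) * w s + w s * ln (q s) + \<eta> * - ln (q s)"
    if "s \<in> T" for s
  proof -
    have q_pos: "0 < q s" "q s + \<eta> \<le> 3/2 * q s"
      using w[OF that] q[OF that] assms(3) by linarith+
    have "min 0 (ln (q s + \<eta>)) * m s \<le> min 0 (ln (q s + \<eta>)) * (w s - \<eta>)"
      using m[OF that] by (intro mult_left_mono_neg) auto
    also have "\<dots> \<le> ln (3/2 * q s) * (w s - \<eta>)"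
    proof (rule mult_right_mono)
      have "ln (q s + \<eta>) \<le> ln (3/2 * q s)"
        using q_pos assms(3) by (subst ln_le_cancel_iff) auto
      then show "min 0 (ln (q s + \<eta>)) \<le> ln (3/2 * q s)" by linarith
    qed (use assms(3) w[OF that] in auto)
    also have "\<dots> = ln (3/2) * (w s - \<eta>) + w s * ln (q s) + \<eta> * - ln (q s)"
      using q_pos ln_mult[of "3/2" "q s"] by (simp add: algebra_simps)
    also have "\<dots> \<le> ln (3/2) * w s + w s * ln (q s) + \<eta> * - ln (q s)"
      using assms(3) by (simp add: algebra_simps)
    finally show ?thesis .
  qed
  have "ln (3/4::real) \<le> 3/4 - 1"
    by (rule ln_le_minus_one) simp
  then have ln_3_2: "ln (3/2::real) + 1/4 \<le> ln 2"
    using ln_div[of "3/2::real" 2] by simp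
  have "(\<Sum>s\<in>T. min 0 (ln (q s + \<eta>)) * m s)
      \<le> (\<Sum>s\<in>T. ln (3/2) * w s + w s * ln (q s) + \<eta> * - ln (q s))"
    using term_bound by (rule sum_mono)
  also have "\<dots> = ln (3/2) + (\<Sum>s\<in>T. w s * ln (q s)) + \<eta> * (\<Sum>s\<in>T. - ln (q s))"
    using assms(2) by (simp only: sum.distrib sum_distrib_left[symmetric])
  finally show ?thesis
    using small ln_3_2 by linarith
qed

lemma eventually_at_right_0_le: "0 < c \<Longrightarrow> \<forall>\<^sub>F x in at_right (0::real). x \<le> c"
  using eventually_at_right_real[of 0 c] by (rule eventually_mono) auto

lemma eventually_disjoint_family_on_balls:
  fixes T :: "'a::metric_space set"
  assumes "finite T"
  shows "\<forall>\<^sub>F \<rho> in at_right 0. disjoint_family_on (\<lambda>s. ball s \<rho>) T"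
proof -
  have "\<forall>\<^sub>F \<rho> in at_right 0. s \<noteq> t \<longrightarrow> \<rho> \<le> dist s t / 2" for s t :: 'a
    using eventually_at_right_0_le[of "dist s t / 2"] by (cases "s = t") (auto elim: eventually_mono)
  then have "\<forall>\<^sub>F \<rho> in at_right 0. \<forall>s\<in>T. \<forall>t\<in>T. s \<noteq> t \<longrightarrow> \<rho> \<le> dist s t / 2"
    using assms by (intro eventually_ball_finite ballI)
  then show ?thesis
  proof (rule eventually_mono)
    fix \<rho> assume sep: "\<forall>s\<in>T. \<forall>t\<in>T. s \<noteq> t \<longrightarrow> \<rho> \<le> dist s t / 2"
    show "disjoint_family_on (\<lambda>s. ball s \<rho>) T"
      unfolding disjoint_family_on_def
    proof (intro ballI impI, rule ccontr)
      fix s t assume "s \<in> T" "t \<in> T" "s \<noteq> t" "ball s \<rho> \<inter> ball t \<rho> \<noteq> {}"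
      then obtain x where "dist s x < \<rho>" "dist t x < \<rho>" "\<rho> \<le> dist s t / 2"
        using sep by auto
      then show False using dist_triangle_half_r[of x s "2 * \<rho>" t] by (simp add: dist_commute)
    qed
  qed
qed

lemma I_one_le_ln_2_plus_I_one_near_finite_measure:
  fixes K :: "'a::euclidean_space set"
  assumes "compact K" "0 < r" "\<mu> \<in> finite_prob_measures_on K"
  shows "\<exists>\<delta>>0. \<forall>\<nu>\<in>prob_measures_on K. FM_dist K \<mu> \<nu> < \<delta> \<longrightarrow>
           I_one \<nu> r \<le> ln 2 + I_one \<mu> (2 * r)"
proof -
  have mu: "\<mu> \<in> prob_measures_on K"
    using assms(3) by (simp add: finite_prob_measures_on_def)
  note M = prob_measures_onD[OF mu]
  interpret prob_space \<mu> by (fact M(1))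
  obtain T where T: "finite T" and w_pos: "\<And>s. s \<in> T \<Longrightarrow> 0 < measure \<mu> {s}"
    and w_sum: "(\<Sum>s\<in>T. measure \<mu> {s}) = 1"
    and integral_T: "\<And>f. f \<in> borel_measurable borel \<Longrightarrow> integral\<^sup>L \<mu> f = (\<Sum>s\<in>T. measure \<mu> {s} * f s)"
    using finite_prob_measures_onE[OF assms(3)] by blast
  define q where "q s = measure \<mu> (ball s (2 * r))" for s
  have w_le_q: "measure \<mu> {s} \<le> q s" for s
    unfolding q_def using assms(2) M(2) by (intro finite_measure_mono) auto
  have I_mu: "I_one \<mu> (2 * r) = (\<Sum>s\<in>T. measure \<mu> {s} * ln (q s))"
    unfolding I_one_def q_def
    by (intro integral_T borel_measurable_ln measurable_measure_ball[OF M(2) finite_measure_axioms])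
  obtain \<rho> where \<rho>: "0 < \<rho>" "\<rho> \<le> 1" "\<rho> \<le> r / 2" and disjoint: "disjoint_family_on (\<lambda>s. ball s \<rho>) T"
  proof -
    have "\<forall>\<^sub>F \<rho> in at_right 0. 0 < \<rho> \<and> \<rho> \<le> 1 \<and> \<rho> \<le> r / 2 \<and> disjoint_family_on (\<lambda>s. ball s \<rho>) T"
      using assms(2) by (intro eventually_conj eventually_at_right_less eventually_at_right_0_le
          eventually_disjoint_family_on_balls T) auto
    then show ?thesis using eventually_happens'[OF trivial_limit_at_right_real] that by blast
  qed
  define L where "L = (\<Sum>s\<in>T. - ln (q s))"
  obtain \<eta> where \<eta>: "0 < \<eta>" "\<And>s. s \<in> T \<Longrightarrow> 2 * \<eta> \<le> measure \<mu> {s}" "\<eta> * L \<le> 1/4"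
  proof -
    have "((\<lambda>\<eta>. \<eta> * L) \<longlongrightarrow> 0 * L) (at_right 0)"
      by (intro tendsto_intros)
    then have "\<forall>\<^sub>F \<eta> in at_right 0. \<eta> * L < 1/4"
      by (intro order_tendstoD(2)) auto
    moreover have "\<forall>\<^sub>F \<eta> in at_right 0. \<forall>s\<in>T. \<eta> \<le> measure \<mu> {s} / 2"
      using T w_pos by (intro eventually_ball_finite ballI eventually_at_right_0_le) auto
    ultimately have "\<forall>\<^sub>F \<eta> in at_right 0. 0 < \<eta> \<and> (\<forall>s\<in>T. 2 * \<eta> \<le> measure \<mu> {s}) \<and> \<eta> * L \<le> 1/4"
      using eventually_at_right_less by eventually_elim auto
    then show ?thesis using eventually_happens'[OF trivial_limit_at_right_real] that by blast
  qed
  show ?thesis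
  proof (intro exI[of _ "\<eta> * \<rho>"] conjI ballI impI)
    show "0 < \<eta> * \<rho>" using \<eta>(1) \<rho>(1) by simp
    fix \<nu> assume nu: "\<nu> \<in> prob_measures_on K" and close: "FM_dist K \<mu> \<nu> < \<eta> * \<rho>"
    note bounds = FM_dist_lt_mass_bounds[OF mu nu \<rho>(1,2) close]
    have "I_one \<nu> r \<le> (\<Sum>s\<in>T. min 0 (ln (q s + \<eta>)) * measure \<nu> (ball s \<rho>))"
      using \<rho>(3) bounds(2)[of _ "2 * r"] unfolding q_def
      by (intro I_one_le_sum_over_disjoint_balls[OF assms(1) nu assms(2) T disjoint, where R = "2 * r - \<rho>"]) auto
    also have "\<dots> \<le> ln 2 + I_one \<mu> (2 * r)"
      unfolding I_mu using \<eta> w_le_q bounds(1)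
      by (intro sum_min_ln_le_ln_2_plus_sum[OF T w_sum]) (auto simp: L_def)
    finally show "I_one \<nu> r \<le> ln 2 + I_one \<mu> (2 * r)" .
  qed
qed

theorem corollary2p4:
  fixes K :: "'a::euclidean_space set" and \<epsilon> r :: real and \<mu> :: "'a measure"
  assumes "compact K" and "\<epsilon> > 0" and "r > 0"
    and "\<mu> \<in> finite_prob_measures_on K"
  shows "\<exists>\<delta>>0. \<forall>\<nu>\<in>prob_measures_on K. FM_dist K \<mu> \<nu> < \<delta> \<longrightarrow>
           I_one \<nu> r \<le> ln 2 + (1 - \<epsilon>) * I_one \<mu> (2 * r)"
proof -
  have "I_one \<mu> (2 * r) \<le> 0"
    using assms(4) by (intro I_one_nonpos) (simp add: finite_prob_measures_on_def prob_measures_on_def)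
  then have "I_one \<mu> (2 * r) \<le> (1 - \<epsilon>) * I_one \<mu> (2 * r)"
    using assms(2) by (simp add: algebra_simps mult_nonneg_nonpos)
  with I_one_le_ln_2_plus_I_one_near_finite_measure[OF assms(1,3,4)] show ?thesis
    by (meson add_left_mono order_trans)
qed

end
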